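(* Let $M>0$ and $0\le\alpha<1$, and let $r_0=r_0(\alpha)$ be the real root in $(0,1)$ of the equation \[M(1-\alpha+\alpha r)=(1+M)(1-\alpha)(1-r)^2.\] Let $\mathcal{F}$ be the class of analytic functions $f(z)=z+\sum_{n\ge2}a_nz^n$ on $\mathbb{D}$ with $|a_n|\le M$ for all $n\ge2$. Then every $f\in\mathcal{F}$ satisfies $\left|\frac{zf'(z)}{f(z)}-1\right|\le1-\alpha$ for $|z|\le r_0$; $r_0(\alpha)$ is the radius of starlikeness of order $\alpha$ of $\mathcal{F}$; and $r_0(1/2)$ is the radius of parabolic starlikeness of $\mathcal{F}$. All results are sharp (in particular $r_0$ in the first statement cannot be replaced by any larger number).
   Context: $\mathbb{D}=\{z\in\mathbb{C}:|z|<1\}$. For a class $\mathcal{F}$ of analytic functions on $\mathbb{D}$ normalized by $f(0)=0$, $f'(0)=1$, and $0\le\alpha<1$, the radius of starlikeness of order $\alpha$ of $\mathcal{F}$ is the supremum of $r\in(0,1]$ such that every $f\in\mathcal{F}$ satisfies $f(z)\ne0$ for $0<|z|<r$ and $\operatorname{Re}\big(zf'(z)/f(z)\big)>\alpha$ for $|z|<r$ (the quotient being $1$ at $z=0$). The radius of parabolic starlikeness of $\mathcal{F}$ is the supremum of $r\in(0,1]$ such that every $f\in\mathcal{F}$ satisfies $\operatorname{Re}\big(zf'(z)/f(z)\big)>\left|zf'(z)/f(z)-1\right|$ for $|z|<r$. *)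

theory Defs
  imports "HOL-Analysis.Analysis"
begin

definition starq :: "(complex \<Rightarrow> complex) \<Rightarrow> complex \<Rightarrow> complex" where
  "starq f z = (if z = 0 then 1 else z * deriv f z / f z)"

definition coeff_bounded_class :: "real \<Rightarrow> (complex \<Rightarrow> complex) set" where
  "coeff_bounded_class M =
     {f. f holomorphic_on ball 0 1 \<and> f 0 = 0 \<and> deriv f 0 = 1 \<and>
         (\<forall>n\<ge>2. norm ((deriv ^^ n) f 0 / of_nat (fact n)) \<le> M)}"

definition radius_starlike :: "real \<Rightarrow> (complex \<Rightarrow> complex) set \<Rightarrow> real" where
  "radius_starlike \<alpha> F = Sup {r. 0 < r \<and> r \<le> 1 \<and>
      (\<forall>f\<in>F. (\<forall>z. 0 < norm z \<and> norm z < r \<longrightarrow> f z \<noteq> 0) \<and>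
              (\<forall>z. norm z < r \<longrightarrow> Re (starq f z) > \<alpha>))}"

definition radius_parabolic :: "(complex \<Rightarrow> complex) set \<Rightarrow> real" where
  "radius_parabolic F = Sup {r. 0 < r \<and> r \<le> 1 \<and>
      (\<forall>f\<in>F. \<forall>z. norm z < r \<longrightarrow> Re (starq f z) > norm (starq f z - 1))}"

end

theory Submission
  imports Defs "HOL-Complex_Analysis.Complex_Analysis"
begin

text \<open>For \<open>|z| = \<rho>\<close> the tails \<open>f(z) - z = \<Sum> a\<^sub>n z\<^sup>n\<close> and \<open>z f'(z) - f(z) = \<Sum> (n - 1) a\<^sub>n z\<^sup>n\<close>
  are dominated by geometric series, of sums \<open>M\<rho>\<^sup>2/(1 - \<rho>)\<close> and \<open>M\<rho>\<^sup>2/(1 - \<rho>)\<^sup>2\<close>. Hence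
  \<open>|z f'/f - 1| \<le> M\<rho> / ((1 - \<rho>)(1 - \<rho> - M\<rho>))\<close> whenever \<open>(1 + M)\<rho> < 1\<close>, with equality
  at \<open>z = \<rho>\<close> for \<open>z - Mz\<^sup>2/(1 - z)\<close>, all of whose coefficients equal \<open>-M\<close>; there
  \<open>z f'/f\<close> is real and \<open>\<le> 1\<close>. The bound increases with \<open>\<rho>\<close>, and clearing denominators in
  "bound \<open>= 1 - \<alpha>\<close>" gives exactly the equation for \<open>r\<^sub>0\<close>. Both radii follow, since
  \<open>|w - 1| < 1 - \<alpha>\<close> forces \<open>Re w > \<alpha>\<close> (and \<open>Re w > |w - 1|\<close> when \<open>\<alpha> = 1/2\<close>), while at
  the extremal point \<open>w = 1 - bound\<close> both inequalities fail.\<close>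

lemma sums_norm_le:
  fixes c :: "nat \<Rightarrow> 'a::banach"
  assumes "c sums A" "d sums D" "\<And>n. norm (c n) \<le> d n"
  shows "norm A \<le> D"
  using norm_suminf_le[of c d] assms by (auto simp: sums_iff)

lemma holomorphic_deriv_power_series:
  assumes "f holomorphic_on ball 0 r" "z \<in> ball 0 r"
  shows "(\<lambda>n. of_nat n * ((deriv ^^ n) f 0 / fact n) * z ^ n) sums (z * deriv f z)"
proof -
  define g where "g n = of_nat n * ((deriv ^^ n) f 0 / fact n) * z ^ n" for n
  have coeff: "(deriv ^^ n) (deriv f) 0 / fact n
      = of_nat (Suc n) * ((deriv ^^ Suc n) f 0 / fact (Suc n))" for n
    by (simp add: funpow_swap1 field_simps del: of_nat_Suc)
  have "(\<lambda>n. (deriv ^^ n) (deriv f) 0 / fact n * z ^ n) sums deriv f z"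
    using holomorphic_power_series[OF holomorphic_deriv[OF assms(1) open_ball] assms(2)] by simp
  then have "(\<lambda>n. z * ((deriv ^^ n) (deriv f) 0 / fact n * z ^ n)) sums (z * deriv f z)"
    by (rule sums_mult)
  then have "(\<lambda>n. g (Suc n)) sums (z * deriv f z)"
    unfolding g_def coeff by (simp only: power_Suc mult_ac)
  then have "g sums (z * deriv f z + g 0)"
    by (simp only: sums_Suc_iff)
  then show ?thesis
    by (simp add: g_def [abs_def])
qed

lemma coeff_bounded_class_nonneg:
  assumes "f \<in> coeff_bounded_class M"
  shows "0 \<le> M"
proof -
  have "\<forall>n\<ge>2. norm ((deriv ^^ n) f 0 / fact n) \<le> M"
    using assms by (simp add: coeff_bounded_class_def)
  then have "norm ((deriv ^^ 2) f 0 / fact 2) \<le> M"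
    by (meson order_refl)
  then show ?thesis
    using norm_ge_zero order_trans by blast
qed

lemma coeff_bounded_class_tail_sums:
  assumes "f \<in> coeff_bounded_class M" "z \<in> ball 0 1"
  defines "a \<equiv> \<lambda>n. (deriv ^^ n) f 0 / fact n"
  shows "(\<lambda>n. a (n + 2) * z ^ (n + 2)) sums (f z - z)"
    and "(\<lambda>n. of_nat (n + 1) * a (n + 2) * z ^ (n + 2)) sums (z * deriv f z - f z)"
proof -
  have holo: "f holomorphic_on ball 0 1" and a0: "a 0 = 0" and a1: "a (Suc 0) = 1"
    using assms(1) by (auto simp: coeff_bounded_class_def a_def)
  have f: "(\<lambda>n. a n * z ^ n) sums f z"
    using holomorphic_power_series[OF holo assms(2)] by (simp add: a_def)
  have df: "(\<lambda>n. of_nat n * a n * z ^ n) sums (z * deriv f z)"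
    using holomorphic_deriv_power_series[OF holo assms(2)] by (simp add: a_def)
  show "(\<lambda>n. a (n + 2) * z ^ (n + 2)) sums (f z - z)"
    using sums_split_initial_segment[OF f, of 2] by (simp add: a0 a1 numeral_2_eq_2)
  have "(\<lambda>n. of_nat n * a n * z ^ n - a n * z ^ n) sums (z * deriv f z - f z)"
    using df f by (rule sums_diff)
  then show "(\<lambda>n. of_nat (n + 1) * a (n + 2) * z ^ (n + 2)) sums (z * deriv f z - f z)"
    using sums_split_initial_segment[of _ _ 2] by (fastforce simp: a0 a1 numeral_2_eq_2 algebra_simps)
qed

lemma coeff_bounded_class_tail_bounds:
  assumes "f \<in> coeff_bounded_class M" "norm z < 1"
  shows "norm (f z - z) \<le> M * norm z ^ 2 / (1 - norm z)"
    and "norm (z * deriv f z - f z) \<le> M * norm z ^ 2 / (1 - norm z) ^ 2"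
proof -
  define \<rho> where "\<rho> = norm z"
  define a where "a n = (deriv ^^ n) f 0 / fact n" for n
  have z: "z \<in> ball 0 1" and \<rho>: "0 \<le> \<rho>" "\<rho> < 1"
    using assms(2) by (auto simp: \<rho>_def)
  have bound: "norm ((deriv ^^ n) f 0 / fact n) \<le> M" if "2 \<le> n" for n
    using assms(1) that by (simp add: coeff_bounded_class_def)
  have a: "norm (a (n + 2)) \<le> M" for n
    unfolding a_def by (rule bound) simp
  have summand_le: "norm (a (n + 2) * z ^ (n + 2)) \<le> M * \<rho> ^ 2 * \<rho> ^ n" for n
  proof -
    have "norm (a (n + 2) * z ^ (n + 2)) = norm (a (n + 2)) * (\<rho> ^ 2 * \<rho> ^ n)"
      by (simp add: norm_mult norm_power \<rho>_def power_add power2_eq_square mult_ac)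
    also have "\<dots> \<le> M * (\<rho> ^ 2 * \<rho> ^ n)"
      using a \<rho> by (intro mult_right_mono) auto
    finally show ?thesis by (simp add: mult_ac)
  qed
  have "(\<lambda>n. M * \<rho> ^ 2 * \<rho> ^ n) sums (M * \<rho> ^ 2 * (1 / (1 - \<rho>)))"
    using geometric_sums[of \<rho>] \<rho> by (intro sums_mult) auto
  from sums_norm_le[OF coeff_bounded_class_tail_sums(1)[OF assms(1) z] this] summand_le
  show "norm (f z - z) \<le> M * norm z ^ 2 / (1 - norm z)"
    by (simp add: a_def \<rho>_def)
  have "(\<lambda>n. M * \<rho> ^ 2 * (of_nat (Suc n) * \<rho> ^ n)) sums (M * \<rho> ^ 2 * (1 / (1 - \<rho>) ^ 2))"
    using geometric_deriv_sums[of \<rho>] \<rho> by (intro sums_mult) auto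
  moreover have "norm (of_nat (n + 1) * a (n + 2) * z ^ (n + 2))
      \<le> M * \<rho> ^ 2 * (of_nat (Suc n) * \<rho> ^ n)" for n
  proof -
    have "norm (of_nat (n + 1) * a (n + 2) * z ^ (n + 2))
        = of_nat (Suc n) * norm (a (n + 2) * z ^ (n + 2))"
      by (simp only: norm_mult norm_of_nat mult.assoc Suc_eq_plus1)
    also have "\<dots> \<le> of_nat (Suc n) * (M * \<rho> ^ 2 * \<rho> ^ n)"
      by (rule mult_left_mono[OF summand_le]) simp
    finally show ?thesis by (simp only: mult_ac)
  qed
  ultimately show "norm (z * deriv f z - f z) \<le> M * norm z ^ 2 / (1 - norm z) ^ 2"
    using sums_norm_le[OF coeff_bounded_class_tail_sums(2)[OF assms(1) z]]
    by (simp add: a_def \<rho>_def)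
qed

lemma starq_minus_one_le:
  assumes "z \<noteq> 0" "norm (f z - z) \<le> a" "a < norm z" "norm (z * deriv f z - f z) \<le> b"
  shows "f z \<noteq> 0" and "norm (starq f z - 1) \<le> b / (norm z - a)"
proof -
  have "norm z - a \<le> norm (f z)"
    using assms(2) norm_triangle_ineq2[of z "f z"] by (simp add: norm_minus_commute)
  then have f: "0 < norm z - a" "norm z - a \<le> norm (f z)"
    using assms(3) by auto
  then show "f z \<noteq> 0" by auto
  then have "starq f z - 1 = (z * deriv f z - f z) / f z"
    using assms(1) by (simp add: starq_def field_simps)
  moreover have "0 \<le> b"
    using assms(4) norm_ge_zero order_trans by blast
  ultimately show "norm (starq f z - 1) \<le> b / (norm z - a)"
    using f assms(4) by (simp add: norm_divide frac_le)
qed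

lemma Re_greater_if_norm_diff_one_less:
  assumes "norm (w - 1) < 1 - \<alpha>"
  shows "\<alpha> < Re w"
  using assms abs_Re_le_cmod[of "w - 1"] by simp

definition starq_bound :: "real \<Rightarrow> real \<Rightarrow> real" where
  "starq_bound M \<rho> = M * \<rho> / ((1 - \<rho>) * (1 - \<rho> - M * \<rho>))"

lemma coeff_bounded_class_starq_le:
  assumes f: "f \<in> coeff_bounded_class M" and z: "z \<noteq> 0" "(1 + M) * norm z < 1"
  shows "f z \<noteq> 0 \<and> norm (starq f z - 1) \<le> starq_bound M (norm z)"
proof -
  define \<rho> where "\<rho> = norm z"
  have M: "0 \<le> M" using coeff_bounded_class_nonneg[OF f] .
  have \<rho>: "0 < \<rho>" "0 < 1 - \<rho> - M * \<rho>"
    using z by (auto simp: \<rho>_def algebra_simps)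
  moreover have "0 \<le> M * \<rho>" using M \<rho> by simp
  ultimately have "0 < 1 - \<rho>" by linarith
  have "M * \<rho>\<^sup>2 < \<rho> * (1 - \<rho>)"
    using mult_strict_left_mono[of "M * \<rho>" "1 - \<rho>" \<rho>] \<rho> by (simp add: power2_eq_square algebra_simps)
  then have "M * \<rho>\<^sup>2 / (1 - \<rho>) < \<rho>"
    using \<open>0 < 1 - \<rho>\<close> by (simp add: divide_less_eq)
  moreover have "\<rho> - M * \<rho>\<^sup>2 / (1 - \<rho>) = \<rho> * (1 - \<rho> - M * \<rho>) / (1 - \<rho>)"
    using \<open>0 < 1 - \<rho>\<close> by (simp add: field_simps power2_eq_square)
  then have "M * \<rho>\<^sup>2 / (1 - \<rho>)\<^sup>2 / (\<rho> - M * \<rho>\<^sup>2 / (1 - \<rho>)) = starq_bound M \<rho>"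
    using \<open>0 < 1 - \<rho>\<close> \<rho> by (simp add: starq_bound_def power2_eq_square)
  moreover have "norm z < 1" using \<open>0 < 1 - \<rho>\<close> by (simp add: \<rho>_def)
  note tails = coeff_bounded_class_tail_bounds[OF f this]
  ultimately show ?thesis
    using starq_minus_one_le[OF z(1) tails(1) _ tails(2)] by (simp add: \<rho>_def)
qed

definition extremal :: "real \<Rightarrow> complex \<Rightarrow> complex" where
  "extremal M z = z - of_real M * z ^ 2 / (1 - z)"

lemma extremal_in_coeff_bounded_class:
  assumes "0 \<le> M"
  shows "extremal M \<in> coeff_bounded_class M"
proof -
  define F where "F = fps_X - fps_const (of_real M) * fps_X ^ 2 * inverse (1 - fps_X :: complex fps)"
  have "extremal M has_fps_expansion F"
    unfolding extremal_def F_def divide_inverse by (intro fps_expansion_intros) auto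
  moreover have "inverse (1 - fps_X :: complex fps) = Abs_fps (\<lambda>n. 1)"
    by (metis fps_inverse_gp' fps_inverse_idempotent fps_nth_Abs_fps one_neq_zero)
  then have "fps_nth F n = (if n = 1 then 1 else if n < 2 then 0 else - of_real M)" for n
    by (simp add: F_def fps_X_power_mult_nth mult.assoc)
  ultimately have coeff: "(deriv ^^ n) (extremal M) 0 / fact n
      = (if n = 1 then 1 else if n < 2 then 0 else - of_real M)" for n
    using fps_nth_fps_expansion by metis
  have "extremal M holomorphic_on ball 0 1"
    unfolding extremal_def by (intro holomorphic_intros) auto
  moreover have "deriv (extremal M) 0 = 1"
    using coeff[of 1] by simp
  ultimately show ?thesis
    using coeff assms by (auto simp: coeff_bounded_class_def extremal_def)
qed

lemma starq_extremal:
  assumes "z \<noteq> 0" "z \<noteq> 1" "1 - z - of_real M * z \<noteq> 0"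
  shows "starq (extremal M) z = 1 - of_real M * z / ((1 - z) * (1 - z - of_real M * z))"
proof -
  define u v where "u = 1 - z" and "v = 1 - z - of_real M * z"
  have nonzero: "z \<noteq> 0" "u \<noteq> 0" "v \<noteq> 0"
    using assms by (auto simp: u_def v_def)
  have "(extremal M has_field_derivative 1 - of_real M * (2 * z - z ^ 2) / u ^ 2) (at z)"
    unfolding extremal_def u_def using nonzero(2)
    by (auto intro!: derivative_eq_intros simp: u_def field_simps power2_eq_square)
  then have "deriv (extremal M) z = 1 - of_real M * (2 * z - z ^ 2) / u ^ 2"
    by (rule DERIV_imp_deriv)
  moreover have "extremal M z = z * v / u"
    using nonzero(2) by (simp add: extremal_def u_def v_def field_simps power2_eq_square)
  ultimately have "starq (extremal M) z = z * (1 - of_real M * (2 * z - z ^ 2) / u ^ 2) / (z * v / u)"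
    using nonzero(1) by (simp add: starq_def)
  also have "\<dots> = (u ^ 2 - of_real M * (2 * z - z ^ 2)) / (u * v)"
    using nonzero by (simp add: field_simps power2_eq_square)
  also have "u ^ 2 - of_real M * (2 * z - z ^ 2) = u * v - of_real M * z"
    by (simp add: u_def v_def algebra_simps power2_eq_square)
  also have "(u * v - of_real M * z) / (u * v) = 1 - of_real M * z / (u * v)"
    using nonzero by (simp add: field_simps)
  finally show ?thesis
    by (simp add: u_def v_def)
qed

lemma starq_extremal_of_real:
  assumes "0 \<le> M" "0 < \<rho>" "(1 + M) * \<rho> < 1"
  shows "starq (extremal M) (of_real \<rho>) = of_real (1 - starq_bound M \<rho>)"
proof -
  have "0 < 1 - \<rho> - M * \<rho>" using assms(3) by (simp add: algebra_simps)
  moreover have "0 \<le> M * \<rho>" using assms by simp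
  ultimately have "1 - \<rho> \<noteq> 0" "1 - \<rho> - M * \<rho> \<noteq> 0" by auto
  moreover have "1 - complex_of_real \<rho> = of_real (1 - \<rho>)"
    and "1 - complex_of_real \<rho> - of_real M * of_real \<rho> = of_real (1 - \<rho> - M * \<rho>)"
    by simp_all
  ultimately have "complex_of_real \<rho> \<noteq> 1" "1 - complex_of_real \<rho> - of_real M * of_real \<rho> \<noteq> 0"
    by (metis of_real_eq_0_iff right_minus_eq)+
  then have "starq (extremal M) (of_real \<rho>)
      = 1 - of_real M * of_real \<rho> / ((1 - of_real \<rho>) * (1 - of_real \<rho> - of_real M * of_real \<rho>))"
    using assms(2) by (intro starq_extremal) auto
  also have "\<dots> = of_real (1 - starq_bound M \<rho>)"
    by (simp add: starq_bound_def)
  finally show ?thesis .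
qed

locale starlike_radius_root =
  fixes M \<alpha> r0 :: real
  assumes M_pos: "0 < M" and alpha_nonneg: "0 \<le> \<alpha>" and alpha_less_1: "\<alpha> < 1"
    and r0_pos: "0 < r0" and r0_less_1: "r0 < 1"
    and root_eq: "M * (1 - \<alpha> + \<alpha> * r0) = (1 + M) * (1 - \<alpha>) * (1 - r0)^2"
begin

lemma root_below_pole: "(1 + M) * r0 < 1"
proof -
  have "(1 - \<alpha>) * (1 - r0) * (1 - r0 - M * r0) = M * r0"
    using root_eq by (simp add: algebra_simps power2_eq_square)
  moreover have "0 < M * r0" "0 < (1 - \<alpha>) * (1 - r0)"
    using M_pos r0_pos r0_less_1 alpha_less_1 by auto
  ultimately have "0 < 1 - r0 - M * r0"
    by (metis zero_less_mult_pos)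
  then show ?thesis by (simp add: algebra_simps)
qed

lemma starq_bound_le_iff:
  assumes "0 < \<rho>" "(1 + M) * \<rho> < 1"
  shows "starq_bound M \<rho> \<le> 1 - \<alpha> \<longleftrightarrow> \<rho> \<le> r0"
    and "starq_bound M \<rho> < 1 - \<alpha> \<longleftrightarrow> \<rho> < r0"
proof -
  \<comment> \<open>the equation for \<open>r0\<close>; cleared of denominators, \<open>starq_bound M \<rho> \<le> 1 - \<alpha>\<close> reads \<open>0 \<le> g \<rho>\<close>\<close>
  define g where "g \<sigma> = (1 + M) * (1 - \<alpha>) * (1 - \<sigma>)^2 - M * (1 - \<alpha> + \<alpha> * \<sigma>)" for \<sigma>
  have g_r0: "g r0 = 0" using root_eq by (simp add: g_def)
  have g_decreasing: "g \<tau> < g \<sigma>" if "\<sigma> < \<tau>" "\<tau> \<le> 1" for \<sigma> \<tau>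
  proof -
    have "(1 - \<tau>)^2 < (1 - \<sigma>)^2" using that by (intro power_strict_mono) auto
    then have "(1 + M) * (1 - \<alpha>) * (1 - \<tau>)^2 < (1 + M) * (1 - \<alpha>) * (1 - \<sigma>)^2"
      using M_pos alpha_less_1 by simp
    moreover have "M * (\<alpha> * \<sigma>) \<le> M * (\<alpha> * \<tau>)"
      using M_pos alpha_nonneg that by (intro mult_left_mono) auto
    ultimately show ?thesis by (simp add: g_def algebra_simps)
  qed
  have "0 < M * \<rho>" using M_pos assms(1) by simp
  then have den: "0 < 1 - \<rho>" "0 < 1 - \<rho> - M * \<rho>" using assms(2) by (auto simp: algebra_simps)
  have g_\<rho>: "g \<rho> = (1 - \<alpha>) * ((1 - \<rho>) * (1 - \<rho> - M * \<rho>)) - M * \<rho>"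
    by (simp add: g_def algebra_simps power2_eq_square)
  have "starq_bound M \<rho> \<le> 1 - \<alpha> \<longleftrightarrow> 0 \<le> g \<rho>"
    using den by (simp add: starq_bound_def g_\<rho> pos_divide_le_eq)
  also have "\<dots> \<longleftrightarrow> \<rho> \<le> r0"
    using g_decreasing[of r0 \<rho>] g_decreasing[of \<rho> r0] g_r0 den r0_less_1
    by (cases \<rho> r0 rule: linorder_cases) auto
  finally show "starq_bound M \<rho> \<le> 1 - \<alpha> \<longleftrightarrow> \<rho> \<le> r0" .
  have "starq_bound M \<rho> < 1 - \<alpha> \<longleftrightarrow> 0 < g \<rho>"
    using den by (simp add: starq_bound_def g_\<rho> pos_divide_less_eq)
  also have "\<dots> \<longleftrightarrow> \<rho> < r0"
    using g_decreasing[of r0 \<rho>] g_decreasing[of \<rho> r0] g_r0 den r0_less_1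
    by (cases \<rho> r0 rule: linorder_cases) auto
  finally show "starq_bound M \<rho> < 1 - \<alpha> \<longleftrightarrow> \<rho> < r0" .
qed

lemma coeff_bounded_class_starq_le_root:
  assumes "f \<in> coeff_bounded_class M" "norm z \<le> r0"
  shows "(z \<noteq> 0 \<longrightarrow> f z \<noteq> 0) \<and> norm (starq f z - 1) \<le> 1 - \<alpha>"
proof (cases "z = 0")
  case True
  then show ?thesis using alpha_less_1 by (simp add: starq_def)
next
  case False
  have "(1 + M) * norm z < 1"
    using root_below_pole mult_left_mono[OF assms(2), of "1 + M"] M_pos by linarith
  then show ?thesis
    using coeff_bounded_class_starq_le[OF assms(1) False] starq_bound_le_iff(1)[of "norm z"]
      False assms(2) by auto
qed

lemma coeff_bounded_class_starq_less_root:
  assumes "f \<in> coeff_bounded_class M" "norm z < r0"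
  shows "(z \<noteq> 0 \<longrightarrow> f z \<noteq> 0) \<and> norm (starq f z - 1) < 1 - \<alpha>"
proof (cases "z = 0")
  case True
  then show ?thesis using alpha_less_1 by (simp add: starq_def)
next
  case False
  have "(1 + M) * norm z < 1"
    using root_below_pole mult_strict_left_mono[OF assms(2), of "1 + M"] M_pos by linarith
  then show ?thesis
    using coeff_bounded_class_starq_le[OF assms(1) False] starq_bound_le_iff(2)[of "norm z"]
      False assms(2) by fastforce
qed

lemma extremal_beyond_root:
  assumes "r0 < r"
  obtains \<rho> where "r0 < \<rho>" "\<rho> < r" "\<rho> < 1"
    and "Re (starq (extremal M) (of_real \<rho>)) < \<alpha>"
    and "1 - \<alpha> < norm (starq (extremal M) (of_real \<rho>) - 1)"
proof -
  have "r0 < min r (1 / (1 + M))"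
    using assms root_below_pole M_pos by (simp add: field_simps)
  then obtain \<rho> where \<rho>: "r0 < \<rho>" "\<rho> < min r (1 / (1 + M))"
    using dense by blast
  then have "0 < \<rho>" "\<rho> < r" and pole: "(1 + M) * \<rho> < 1"
    using M_pos r0_pos by (simp_all add: field_simps)
  moreover have "0 < M * \<rho>"
    using M_pos \<open>0 < \<rho>\<close> by simp
  ultimately have "\<rho> < 1"
    by (simp add: algebra_simps)
  have "1 - \<alpha> < starq_bound M \<rho>"
    using starq_bound_le_iff(1)[OF \<open>0 < \<rho>\<close> pole] \<rho>(1) by linarith
  moreover have "starq (extremal M) (of_real \<rho>) = of_real (1 - starq_bound M \<rho>)"
    using starq_extremal_of_real[OF _ \<open>0 < \<rho>\<close> pole] M_pos by simp
  ultimately have "Re (starq (extremal M) (of_real \<rho>)) < \<alpha>"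
    and "1 - \<alpha> < norm (starq (extremal M) (of_real \<rho>) - 1)"
    using alpha_less_1 by simp_all
  with \<rho>(1) \<open>\<rho> < r\<close> \<open>\<rho> < 1\<close> that show ?thesis
    by blast
qed

lemma starq_bound_sharp:
  assumes "r0 < r"
  shows "\<exists>f\<in>coeff_bounded_class M. \<exists>z. norm z < 1 \<and> norm z \<le> r \<and>
           \<not> ((z \<noteq> 0 \<longrightarrow> f z \<noteq> 0) \<and> norm (starq f z - 1) \<le> 1 - \<alpha>)"
proof -
  obtain \<rho> where "r0 < \<rho>" "\<rho> < r" "\<rho> < 1"
    and "1 - \<alpha> < norm (starq (extremal M) (of_real \<rho>) - 1)"
    using extremal_beyond_root[OF assms] .
  then show ?thesis
    using extremal_in_coeff_bounded_class M_pos r0_pos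
    by (intro bexI[of _ "extremal M"] exI[of _ "of_real \<rho>"]) auto
qed

lemma radius_starlike_eq_root: "radius_starlike \<alpha> (coeff_bounded_class M) = r0"
  unfolding radius_starlike_def
proof (rule cSup_eq_maximum, goal_cases)
  case 1
  have "(z \<noteq> 0 \<longrightarrow> f z \<noteq> 0) \<and> \<alpha> < Re (starq f z)"
    if "f \<in> coeff_bounded_class M" "norm z < r0" for f z
    using coeff_bounded_class_starq_less_root[OF that] Re_greater_if_norm_diff_one_less by blast
  then show ?case
    using r0_pos r0_less_1 by auto
next
  case (2 x)
  then have x: "\<forall>z. norm z < x \<longrightarrow> \<alpha> < Re (starq (extremal M) z)"
    using extremal_in_coeff_bounded_class M_pos by auto
  show ?case
  proof (rule ccontr)
    assume "\<not> x \<le> r0"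
    then obtain \<rho> where "r0 < \<rho>" "\<rho> < x" "Re (starq (extremal M) (of_real \<rho>)) < \<alpha>"
      using extremal_beyond_root[of x] by auto
    moreover have "norm (of_real \<rho> :: complex) < x"
      using \<open>r0 < \<rho>\<close> \<open>\<rho> < x\<close> r0_pos by simp
    ultimately show False
      using x by fastforce
  qed
qed

lemma radius_parabolic_eq_root:
  assumes "\<alpha> = 1 / 2"
  shows "radius_parabolic (coeff_bounded_class M) = r0"
  unfolding radius_parabolic_def
proof (rule cSup_eq_maximum, goal_cases)
  case 1
  have "norm (starq f z - 1) < Re (starq f z)"
    if "f \<in> coeff_bounded_class M" "norm z < r0" for f z
    using coeff_bounded_class_starq_less_root[OF that] Re_greater_if_norm_diff_one_less[of "starq f z"] assms
    by auto
  then show ?case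
    using r0_pos r0_less_1 by auto
next
  case (2 x)
  then have x: "\<forall>z. norm z < x \<longrightarrow> norm (starq (extremal M) z - 1) < Re (starq (extremal M) z)"
    using extremal_in_coeff_bounded_class M_pos by auto
  show ?case
  proof (rule ccontr)
    assume "\<not> x \<le> r0"
    then obtain \<rho> where "r0 < \<rho>" "\<rho> < x"
      and "Re (starq (extremal M) (of_real \<rho>)) < \<alpha>"
      and "1 - \<alpha> < norm (starq (extremal M) (of_real \<rho>) - 1)"
      using extremal_beyond_root[of x] by auto
    moreover have "norm (of_real \<rho> :: complex) < x"
      using \<open>r0 < \<rho>\<close> \<open>\<rho> < x\<close> r0_pos by simp
    ultimately show False
      using x assms by fastforce
  qed
qed

end

theorem corollary2p6:
  fixes M \<alpha> r0 r1 :: real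
  assumes "M > 0" and "0 \<le> \<alpha>" and "\<alpha> < 1"
    and "0 < r0" and "r0 < 1"
    and "M * (1 - \<alpha> + \<alpha> * r0) = (1 + M) * (1 - \<alpha>) * (1 - r0)^2"
    and "0 < r1" and "r1 < 1"
    and "M * (1 - 1/2 + 1/2 * r1) = (1 + M) * (1 - 1/2) * (1 - r1)^2"
  shows "(\<forall>f\<in>coeff_bounded_class M. \<forall>z. norm z \<le> r0 \<longrightarrow>
            (z \<noteq> 0 \<longrightarrow> f z \<noteq> 0) \<and> norm (starq f z - 1) \<le> 1 - \<alpha>)
       \<and> (\<forall>r>r0. \<exists>f\<in>coeff_bounded_class M. \<exists>z. norm z < 1 \<and> norm z \<le> r \<and>
            \<not> ((z \<noteq> 0 \<longrightarrow> f z \<noteq> 0) \<and> norm (starq f z - 1) \<le> 1 - \<alpha>))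
       \<and> radius_starlike \<alpha> (coeff_bounded_class M) = r0
       \<and> radius_parabolic (coeff_bounded_class M) = r1"
proof -
  interpret starlike: starlike_radius_root M \<alpha> r0
    using assms(1-6) by unfold_locales
  interpret parabolic: starlike_radius_root M "1 / 2" r1
    using assms(1,7-9) by unfold_locales simp_all
  show ?thesis
    using starlike.coeff_bounded_class_starq_le_root starlike.starq_bound_sharp
      starlike.radius_starlike_eq_root parabolic.radius_parabolic_eq_root
    by blast
qed

end
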